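(* Let $\beta>2\alpha>0$ with $\beta+2\alpha\le1$, and let $\varphi_N(x)=\frac12x^TAx-\sum_{k=1}^{s_N}\log\cosh(x^TAe_k)$ for $x\in\mathbb{R}^{s_N}$. Then $\varphi_N$ takes its global minimum at $x=(0,\dots,0)$.
   Context: $A$ is the $s_N\times s_N$ symmetric circulant matrix $A=\beta I+\alpha(P+P^T)$, where $P$ is the cyclic shift matrix (so $A_{kk}=\beta$, $A_{k,k\pm1}=\alpha$ with indices mod $s_N$); $e_k$ are the standard basis vectors of $\mathbb{R}^{s_N}$. *)

theory Defs
  imports "HOL-Analysis.Analysis"
begin

text \<open>Vectors in R^n are represented as functions nat => real, only indices i < n matter.
  Matrices are nat => nat => real with indices < n.\<close>

definition shiftP :: "nat \<Rightarrow> nat \<Rightarrow> nat \<Rightarrow> real" where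
  "shiftP n i j = (if j = (i + 1) mod n then 1 else 0)"

definition circA :: "nat \<Rightarrow> real \<Rightarrow> real \<Rightarrow> nat \<Rightarrow> nat \<Rightarrow> real" where
  "circA n \<alpha> \<beta> i j = \<beta> * (if i = j then 1 else 0) + \<alpha> * (shiftP n i j + shiftP n j i)"

definition matvec :: "nat \<Rightarrow> (nat \<Rightarrow> nat \<Rightarrow> real) \<Rightarrow> (nat \<Rightarrow> real) \<Rightarrow> nat \<Rightarrow> real" where
  "matvec n M x i = (\<Sum>j<n. M i j * x j)"

definition phiN :: "nat \<Rightarrow> real \<Rightarrow> real \<Rightarrow> (nat \<Rightarrow> real) \<Rightarrow> real" where
  "phiN n \<alpha> \<beta> x =
     (1/2) * (\<Sum>i<n. x i * matvec n (circA n \<alpha> \<beta>) x i)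
     - (\<Sum>k<n. ln (cosh (\<Sum>i<n. x i * circA n \<alpha> \<beta> i k)))"

end

theory Submission
  imports Defs "HOL-Number_Theory.Cong"
begin

text \<open>Since \<open>tanh t \<le> t\<close> for \<open>t \<ge> 0\<close>, we have \<open>ln (cosh t) \<le> t\<^sup>2/2\<close>, hence
  \<open>\<phi>\<^sub>N(x) \<ge> (x\<^sup>TAx - |Ax|\<^sup>2)/2 = x\<^sup>T(A - A\<^sup>2)x/2\<close>, while \<open>\<phi>\<^sub>N(0) = 0\<close>.
  The eigenvalues \<open>\<beta> + 2\<alpha> cos \<theta>\<close> of the circulant \<open>A\<close> lie in \<open>[\<beta> - 2\<alpha>, \<beta> + 2\<alpha>] \<subseteq> [0, 1]\<close>, so
  \<open>A - A\<^sup>2\<close> is positive semidefinite.  Concretely, \<open>4 x\<^sup>T(A - A\<^sup>2)x\<close> is a nonnegative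
  combination of \<open>\<Sum>(x\<^sub>k + x\<^sub>k\<^sub>+\<^sub>1)\<^sup>2\<close>, \<open>\<Sum>(x\<^sub>k - x\<^sub>k\<^sub>+\<^sub>1)\<^sup>2\<close> and \<open>\<Sum>(x\<^sub>k\<^sub>-\<^sub>1 - x\<^sub>k\<^sub>+\<^sub>1)\<^sup>2\<close>
  (indices mod \<open>n\<close>), the remaining terms cancelling under cyclic reindexing.\<close>

lemma mod_succ_pred_cancel:
  assumes "k < (n::nat)"
  shows "((k + 1) mod n + (n - 1)) mod n = k"
proof -
  have "((k + 1) mod n + (n - 1)) mod n = (k + 1 + (n - 1)) mod n"
    by (rule mod_add_left_eq)
  then show ?thesis using assms by simp
qed

lemma mod_pred_succ_cancel:
  assumes "k < (n::nat)"
  shows "((k + (n - 1)) mod n + 1) mod n = k"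
proof -
  have "((k + (n - 1)) mod n + 1) mod n = (k + (n - 1) + 1) mod n"
    by (rule mod_add_left_eq)
  then show ?thesis using assms by simp
qed

lemma mod_succ_eq_iff_pred:
  assumes "j < n" "k < (n::nat)"
  shows "k = (j + 1) mod n \<longleftrightarrow> j = (k + (n - 1)) mod n"
  using assms mod_succ_pred_cancel mod_pred_succ_cancel by metis

lemma sum_mod_shift:
  fixes f :: "nat \<Rightarrow> 'a::comm_monoid_add"
  shows "(\<Sum>k<n. f ((k + m) mod n)) = (\<Sum>k<n. f k)"
proof (rule sum.reindex_bij_betw)
  have "inj_on (\<lambda>k. (k + m) mod n) {..<n}"
  proof (rule inj_onI)
    fix i j assume "i \<in> {..<n}" "j \<in> {..<n}" "(i + m) mod n = (j + m) mod n"
    then show "i = j"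
      using cong_add_rcancel_nat[of i m j n] by (simp add: cong_def)
  qed
  moreover have "(\<lambda>k. (k + m) mod n) ` {..<n} \<subseteq> {..<n}" by auto
  ultimately show "bij_betw (\<lambda>k. (k + m) mod n) {..<n} {..<n}"
    by (simp add: bij_betw_def endo_inj_surj)
qed

lemma circA_sym: "circA n \<alpha> \<beta> i j = circA n \<alpha> \<beta> j i"
  by (simp add: circA_def)

lemma matvec_circA:
  assumes k: "k < n"
  shows "matvec n (circA n \<alpha> \<beta>) x k
    = \<beta> * x k + \<alpha> * (x ((k + (n - 1)) mod n) + x ((k + 1) mod n))"
proof -
  have "matvec n (circA n \<alpha> \<beta>) x k
      = (\<Sum>j<n. (if j = k then \<beta> * x j else 0) + (if j = (k + 1) mod n then \<alpha> * x j else 0)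
                 + (if j = (k + (n - 1)) mod n then \<alpha> * x j else 0))"
    unfolding matvec_def circA_def shiftP_def
    by (rule sum.cong) (use mod_succ_eq_iff_pred[OF _ k] in \<open>auto simp: algebra_simps\<close>)
  also have "\<dots> = \<beta> * x k + \<alpha> * (x ((k + (n - 1)) mod n) + x ((k + 1) mod n))"
    using k by (simp add: sum.distrib algebra_simps)
  finally show ?thesis .
qed

text \<open>The first two coefficients are \<open>\<lambda>(1 - \<lambda>)\<close> at the extreme eigenvalues \<open>\<lambda> = \<beta> \<plusminus> 2\<alpha>\<close>;
  the last three terms are differences of cyclically shifted products and vanish when summed.\<close>

lemma three_term_sos_identity:
  fixes \<alpha> \<beta> u v w :: real
  shows "4 * (v * (\<beta> * v + \<alpha> * (u + w)) - (\<beta> * v + \<alpha> * (u + w))^2)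
    = (\<beta> + 2 * \<alpha>) * (1 - \<beta> - 2 * \<alpha>) * (v + w)^2 + (\<beta> - 2 * \<alpha>) * (1 - \<beta> + 2 * \<alpha>) * (v - w)^2
      + 4 * \<alpha>^2 * (u - w)^2
      + 2 * (\<beta> - \<beta>^2) * (v^2 - w^2) + 8 * \<alpha>^2 * (v^2 - u^2) + 4 * \<alpha> * (1 - 2 * \<beta>) * (u * v - v * w)"
  by algebra

lemma circA_norm_le_quadratic_form:
  fixes x :: "nat \<Rightarrow> real"
  assumes "0 \<le> \<alpha>" "2 * \<alpha> \<le> \<beta>" "\<beta> + 2 * \<alpha> \<le> 1"
  shows "(\<Sum>k<n. (matvec n (circA n \<alpha> \<beta>) x k)^2) \<le> (\<Sum>k<n. x k * matvec n (circA n \<alpha> \<beta>) x k)"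
proof -
  define y where "y = matvec n (circA n \<alpha> \<beta>) x"
  define x_next where "x_next k = x ((k + 1) mod n)" for k
  define x_prev where "x_prev k = x ((k + (n - 1)) mod n)" for k
  define square_terms where "square_terms k =
    (\<beta> + 2 * \<alpha>) * (1 - \<beta> - 2 * \<alpha>) * (x k + x_next k)^2
    + (\<beta> - 2 * \<alpha>) * (1 - \<beta> + 2 * \<alpha>) * (x k - x_next k)^2 + 4 * \<alpha>^2 * (x_prev k - x_next k)^2" for k
  define shift_terms where "shift_terms k =
    2 * (\<beta> - \<beta>^2) * ((x k)^2 - (x_next k)^2) + 8 * \<alpha>^2 * ((x k)^2 - (x_prev k)^2)
    + 4 * \<alpha> * (1 - 2 * \<beta>) * (x_prev k * x k - x k * x_next k)" for k
  have pointwise: "4 * (x k * y k - (y k)^2) = square_terms k + shift_terms k" if "k < n" for k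
  proof -
    have "y k = \<beta> * x k + \<alpha> * (x_prev k + x_next k)"
      using that by (simp add: y_def x_prev_def x_next_def matvec_circA)
    then show ?thesis unfolding square_terms_def shift_terms_def by (simp only: three_term_sos_identity)
  qed
  have "(\<Sum>k<n. (x_next k)^2) = (\<Sum>k<n. (x k)^2)" "(\<Sum>k<n. (x_prev k)^2) = (\<Sum>k<n. (x k)^2)"
    unfolding x_next_def x_prev_def by (rule sum_mod_shift)+
  moreover have "(\<Sum>k<n. x_prev k * x k) = (\<Sum>k<n. x k * x_next k)"
  proof -
    have "(\<Sum>k<n. x_prev k * x k) = (\<Sum>k<n. x_prev ((k + 1) mod n) * x ((k + 1) mod n))"
      by (rule sum_mod_shift[symmetric])
    also have "\<dots> = (\<Sum>k<n. x k * x_next k)"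
    proof (rule sum.cong)
      fix k assume "k \<in> {..<n}"
      then have "x_prev ((k + 1) mod n) = x k"
        by (simp only: x_prev_def mod_succ_pred_cancel lessThan_iff)
      then show "x_prev ((k + 1) mod n) * x ((k + 1) mod n) = x k * x_next k"
        by (simp add: x_next_def)
    qed simp
    finally show ?thesis .
  qed
  ultimately have "(\<Sum>k<n. shift_terms k) = 0"
    by (simp add: shift_terms_def sum.distrib sum_subtractf sum_distrib_left[symmetric])
  moreover have "(\<Sum>k<n. square_terms k) \<ge> 0"
    unfolding square_terms_def using assms
    by (intro sum_nonneg add_nonneg_nonneg mult_nonneg_nonneg) auto
  moreover have "4 * (\<Sum>k<n. x k * y k - (y k)^2)
      = (\<Sum>k<n. square_terms k) + (\<Sum>k<n. shift_terms k)"
    unfolding sum_distrib_left sum.distrib[symmetric] by (rule sum.cong[OF refl], rule pointwise) simp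
  ultimately have "(\<Sum>k<n. x k * y k - (y k)^2) \<ge> 0" by linarith
  then show ?thesis by (simp add: y_def sum_subtractf)
qed

lemma tanh_le_self:
  fixes t :: real
  assumes "0 \<le> t"
  shows "tanh t \<le> t"
proof -
  have "(\<lambda>u. u - tanh u) 0 \<le> (\<lambda>u. u - tanh u) t"
  proof (rule deriv_nonneg_imp_mono[where g="\<lambda>u. u - tanh u" and g'="\<lambda>u. (tanh u)^2"])
    fix u :: real
    show "((\<lambda>u. u - tanh u) has_real_derivative (tanh u)^2) (at u)"
      by (auto intro!: derivative_eq_intros)
  qed (use assms in auto)
  then show ?thesis by simp
qed

lemma ln_cosh_le_half_square:
  fixes t :: real
  shows "ln (cosh t) \<le> t^2 / 2"
proof -
  have "(\<lambda>u. u^2 / 2 - ln (cosh u)) 0 \<le> (\<lambda>u. u^2 / 2 - ln (cosh u)) \<bar>t\<bar>"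
  proof (rule deriv_nonneg_imp_mono[where g="\<lambda>u. u^2 / 2 - ln (cosh u)" and g'="\<lambda>u. u - tanh u"])
    fix u :: real
    assume "u \<in> {0..\<bar>t\<bar>}"
    then show "u - tanh u \<ge> 0" using tanh_le_self by simp
    show "((\<lambda>u. u^2 / 2 - ln (cosh u)) has_real_derivative u - tanh u) (at u)"
      by (auto intro!: derivative_eq_intros simp: tanh_def)
  qed simp
  then show ?thesis by simp
qed

theorem lemma4p3:
  fixes n :: nat and \<alpha> \<beta> :: real and x :: "nat \<Rightarrow> real"
  assumes "\<beta> > 2 * \<alpha>" and "2 * \<alpha> > 0" and "\<beta> + 2 * \<alpha> \<le> 1"
  shows "phiN n \<alpha> \<beta> (\<lambda>_. 0) \<le> phiN n \<alpha> \<beta> x"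
proof -
  define y where "y = matvec n (circA n \<alpha> \<beta>) x"
  have "phiN n \<alpha> \<beta> (\<lambda>_. 0) = 0"
    by (simp add: phiN_def matvec_def)
  moreover have "phiN n \<alpha> \<beta> x = (\<Sum>k<n. x k * y k) / 2 - (\<Sum>k<n. ln (cosh (y k)))"
    by (simp add: phiN_def y_def matvec_def circA_sym mult.commute)
  moreover have "(\<Sum>k<n. ln (cosh (y k))) \<le> (\<Sum>k<n. (y k)^2) / 2"
    unfolding sum_divide_distrib by (intro sum_mono ln_cosh_le_half_square)
  moreover have "(\<Sum>k<n. (y k)^2) \<le> (\<Sum>k<n. x k * y k)"
    unfolding y_def using assms by (intro circA_norm_le_quadratic_form) auto
  ultimately show ?thesis by linarith
qed

end
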